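(* Let $p\in W^{1,\infty}(\mathbb{R}^+\times\mathbb{R}^+)$ with $p\ge0$, $\gamma:=\operatorname{ess\,sup}\partial_Np$, and let $(n^0_j)_{j\ge1}$ be nonnegative with $\|n^0\|_1<\infty$, $\|n^0\|_\infty<\infty$, $\gamma\|n^0\|_1<1$ and $TV(n^0)<\infty$. Consider the ITM upwind scheme under the CFL condition (with $N^m$ the unique solution of its fixed-point equation). Then there exist constants $C_1,C_2>0$ depending only on $p$, $\|n^0\|_1$ and $\|n^0\|_\infty$ (and not on $\Delta t,\Delta s,m$) such that for every $m\in\mathbb{N}$, with $T=m\Delta t$, $$TV(n^m)\le e^{C_1T}\,TV(n^0)+C_2\left(e^{C_1T}-1\right).$$
   Context: ITM upwind scheme: fix $\Delta s,\Delta t>0$; set $s_j=(j-\tfrac12)\Delta s$ for $j\in\{1,2,\dots\}$ and $t^m=m\Delta t$. For a sequence $u=(u_j)_{j\ge1}$, $\|u\|_1=\sum_{j\ge1}\Delta s|u_j|$, $\|u\|_\infty=\sup_j|u_j|$. Given nonnegative initial values $(n^0_j)_{j\ge1}$, for $m=0,1,2,\dots$: $N^m\ge0$ is a solution of $N^m=\sum_{j\ge1}\Delta s\,p(s_j,N^m)\,n^m_j$, one sets $n^m_0:=N^m$, and $n^{m+1}_j=n^m_j-\frac{\Delta t}{\Delta s}(n^m_j-n^m_{j-1})-\Delta t\,p(s_j,N^m)\,n^m_j$ for $j\ge1$. CFL condition: $\Delta t\le(\frac{1}{\Delta s}+\|p\|_\infty)^{-1}$. Under $\gamma\|n^0\|_1<1$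 the fixed-point equation for $N^m$ has a unique nonnegative solution for every $m$. Discrete total variation (including the boundary value): $TV(n^m)=\sum_{j\ge0}|n^m_{j+1}-n^m_j|$ with $n^m_0=N^m$. $\gamma$ is the essential supremum of $\partial_N p$. *)

theory Defs
  imports "HOL-Analysis.Analysis" "HOL-Probability.Probability"
begin

definition quadrant :: "(real \<times> real) set" where
  "quadrant = {0..} \<times> {0..}"

text \<open>Partial derivative of p in N (where it exists; 0 on the null set where it does not).\<close>
definition partialN :: "(real \<Rightarrow> real \<Rightarrow> real) \<Rightarrow> real \<times> real \<Rightarrow> real" where
  "partialN p x = (if (\<lambda>y. p (fst x) y) differentiable (at (snd x))
                   then deriv (\<lambda>y. p (fst x) y) (snd x) else 0)"

definition gammaP :: "(real \<Rightarrow> real \<Rightarrow> real) \<Rightarrow> ereal" where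
  "gammaP p = esssup (restrict_space lborel ({0<..} \<times> {0<..})) (\<lambda>x. ereal (partialN p x))"

definition supnormP :: "(real \<Rightarrow> real \<Rightarrow> real) \<Rightarrow> real" where
  "supnormP p = (SUP x\<in>quadrant. \<bar>p (fst x) (snd x)\<bar>)"

definition sgrid :: "real \<Rightarrow> nat \<Rightarrow> real" where
  "sgrid ds j = (real j - 1/2) * ds"

text \<open>Discrete total variation including the boundary value u 0.\<close>
definition discTV :: "(nat \<Rightarrow> real) \<Rightarrow> ennreal" where
  "discTV u = (\<Sum>j. ennreal \<bar>u (Suc j) - u j\<bar>)"

end

theory Submission
  imports Defs
begin

text \<open>
  Convexity of the upwind update under the CFL condition and the Lipschitz continuity of \<open>p\<close> in
  \<open>s\<close> give \<open>TV(n\<^sup>m\<^sup>+\<^sup>1) \<le> TV(n\<^sup>m) + |N\<^sup>m\<^sup>+\<^sup>1 - N\<^sup>m| + \<Delta>t (\<parallel>p\<parallel>\<^sup>2 + L) M\<close>, where \<open>M\<close> is the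
  conserved mass. Subtracting the fixed-point equations for \<open>N\<^sup>m\<^sup>+\<^sup>1\<close> and \<open>N\<^sup>m\<close> and using the
  one-sided bound \<open>p(s,N') - p(s,N) \<le> c (N' - N)\<close> with \<open>c M < 1\<close> yields
  \<open>(1 - c M) |N\<^sup>m\<^sup>+\<^sup>1 - N\<^sup>m| \<le> \<Delta>t \<parallel>p\<parallel> (TV(n\<^sup>m) + \<parallel>p\<parallel> M)\<close>; a discrete Gronwall argument
  closes the recursion. The one-sided bound follows from \<open>\<gamma> < c\<close> by Fubini and the fact that a
  Lipschitz function of one variable is differentiable almost everywhere, which is proved via
  Vitali coverings: on the set where a lower Dini derivative lies below \<open>r\<close> and an upper one above
  \<open>R > r\<close>, the Lebesgue--Stieltjes measure of a monotone function is at most \<open>r\<close> and at least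
  \<open>R\<close> times Lebesgue measure.
\<close>

section \<open>Almost everywhere differentiability of Lipschitz functions\<close>

lemma frequently_at_right_0_iff:
  "(\<exists>\<^sub>F t in at_right 0. P t) \<longleftrightarrow> (\<forall>d>0. \<exists>t. 0 < t \<and> t < (d::real) \<and> P t)"
  by (auto simp: frequently_at dist_real_def)

lemma frequently_at_left_0_iff:
  "(\<exists>\<^sub>F t in at_left 0. P t) \<longleftrightarrow> (\<exists>\<^sub>F t in at_right 0. P (- t :: real))"
  by (simp add: at_left_minus frequently_filtermap)

lemma frequently_at_right_0_iff_nat:
  "(\<exists>\<^sub>F t in at_right 0. P t) \<longleftrightarrow> (\<forall>n::nat. \<exists>t\<in>{0<..<1 / Suc n}. P (t::real))"
  unfolding frequently_at_right_0_iff greaterThanLessThan_iff Bex_def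
  by (meson less_trans nat_approx_posE zero_less_divide_1_iff of_nat_0_less_iff zero_less_Suc)

lemma borel_frequently_at_right_less:
  fixes g h :: "real \<Rightarrow> 'a::topological_space \<Rightarrow> real"
  assumes "\<And>t. continuous_on UNIV (g t)" "\<And>t. continuous_on UNIV (h t)"
  shows "{x. \<exists>\<^sub>F t in at_right 0. g t x < h t x} \<in> sets borel"
proof -
  have eq: "{x. \<exists>\<^sub>F t in at_right 0. g t x < h t x} = (\<Inter>n::nat. \<Union>t\<in>{0<..<1 / Suc n}. {x. g t x < h t x})"
    unfolding frequently_at_right_0_iff_nat by (simp add: set_eq_iff)
  have "open {x. g t x < h t x}" for t
    by (rule open_Collect_less) (use assms in auto)
  then show ?thesis
    unfolding eq by (intro sets.countable_INT') (auto intro!: borel_open)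
qed

definition dini_gap_set :: "(real \<Rightarrow> real) \<Rightarrow> real \<Rightarrow> real \<Rightarrow> real set" where
  "dini_gap_set f r R = {x. (\<exists>\<^sub>F t in at_right 0. f x - f (x - t) < r * t) \<and>
                            (\<exists>\<^sub>F t in at_right 0. R * t < f (x + t) - f x)}"

lemma dini_gap_set_borel:
  assumes "continuous_on UNIV f"
  shows "dini_gap_set f r R \<in> sets borel"
proof -
  have "dini_gap_set f r R = {x. \<exists>\<^sub>F t in at_right 0. f x - f (x - t) < r * t}
                          \<inter> {x. \<exists>\<^sub>F t in at_right 0. R * t < f (x + t) - f x}"
    by (auto simp: dini_gap_set_def)
  also have "\<dots> \<in> sets borel"
    by (intro sets.Int borel_frequently_at_right_less continuous_intros
          continuous_on_compose2[OF assms]) auto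
  finally show ?thesis .
qed

lemma Vitali_covering_intervals:
  fixes S :: "real set" and K :: "(real \<times> real) set"
  assumes K: "\<And>a b. (a, b) \<in> K \<Longrightarrow> a < b"
    and fine: "\<And>x d. x \<in> S \<Longrightarrow> 0 < d \<Longrightarrow> \<exists>a b. (a, b) \<in> K \<and> x \<in> {a..b} \<and> b - a < d"
  obtains C Z where "countable C" "C \<subseteq> K" "disjoint_family_on (\<lambda>(a, b). {a<..b}) C"
    "Z \<in> null_sets lborel" "S \<subseteq> Z \<union> (\<Union>(a, b)\<in>C. {a<..<b})"
proof -
  define c where "c = (\<lambda>(a, b). (a + b) / 2 :: real)"
  define r where "r = (\<lambda>(a, b). (b - a) / 2 :: real)"
  have cball: "cball (c i) (r i) = {fst i..snd i}" for i
    by (auto simp: c_def r_def cball_eq_atLeastAtMost field_simps split: prod.splits)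
  obtain C where C: "countable C" "C \<subseteq> K"
    and disj: "pairwise (\<lambda>i j. disjnt (cball (c i) (r i)) (cball (c j) (r j))) C"
    and neg: "negligible (S - (\<Union>i\<in>C. cball (c i) (r i)))"
  proof (rule Vitali_covering_theorem_cballs[of K r S c])
    show "0 < r i" if "i \<in> K" for i
      using K that by (auto simp: r_def split: prod.splits)
    show "\<exists>i. i \<in> K \<and> x \<in> cball (c i) (r i) \<and> r i < d" if "x \<in> S" "0 < d" for x d
      using fine[OF that] cball by (fastforce simp: r_def)
  qed
  obtain Z1 where Z1: "Z1 \<in> null_sets lborel" "S - (\<Union>i\<in>C. cball (c i) (r i)) \<subseteq> Z1"
    using neg unfolding negligible_iff_null_sets null_sets_completion_iff2 by blast
  define Z where "Z = Z1 \<union> (\<Union>i\<in>C. {fst i, snd i})"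
  show thesis
  proof
    have "{fst i<..snd i} \<subseteq> cball (c i) (r i)" for i
      by (auto simp: cball)
    then show "disjoint_family_on (\<lambda>(a, b). {a<..b}) C"
      using disj unfolding disjoint_family_on_def pairwise_def disjnt_def case_prod_beta
      by blast
    show "Z \<in> null_sets lborel"
      unfolding Z_def by (rule null_sets.Un[OF Z1(1) countable_imp_null_set_lborel]) (use C(1) in auto)
    show "S \<subseteq> Z \<union> (\<Union>(a, b)\<in>C. {a<..<b})"
      using Z1(2) cball by (fastforce simp: Z_def)
  qed (use C in auto)
qed

lemma emeasure_interval_measure_UN_Ioc:
  fixes f :: "real \<Rightarrow> real"
  assumes "mono f" "continuous_on UNIV f" "countable C"
    "\<And>a b. (a, b) \<in> C \<Longrightarrow> a \<le> b" "disjoint_family_on (\<lambda>(a, b). {a<..b}) C"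
  shows "emeasure (interval_measure f) (\<Union>(a, b)\<in>C. {a<..b})
           = (\<integral>\<^sup>+i. ennreal (f (snd i) - f (fst i)) \<partial>count_space C)"
proof -
  have "continuous (at_right x) f" for x
    using assms(2) continuous_within_subset[of x UNIV f "{x<..}"]
    by (simp add: continuous_on_eq_continuous_within)
  note assms = assms this
  have "emeasure (interval_measure f) (\<Union>(a, b)\<in>C. {a<..b})
          = (\<integral>\<^sup>+i. emeasure (interval_measure f) (case i of (a, b) \<Rightarrow> {a<..b}) \<partial>count_space C)"
    by (rule emeasure_UN_countable) (use assms in \<open>auto split: prod.splits\<close>)
  also have "\<dots> = (\<integral>\<^sup>+i. ennreal (f (snd i) - f (fst i)) \<partial>count_space C)"
    using assms by (intro nn_integral_cong) (auto simp: emeasure_interval_measure_Ioc monoD split: prod.splits)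
  finally show ?thesis .
qed

lemma emeasure_lborel_UN_Ioc:
  assumes "countable C" "\<And>a b. (a, b) \<in> C \<Longrightarrow> a \<le> b" "disjoint_family_on (\<lambda>(a, b). {a<..b}) C"
  shows "emeasure lborel (\<Union>(a, b)\<in>C. {a<..b::real}) = (\<integral>\<^sup>+i. ennreal (snd i - fst i) \<partial>count_space C)"
  unfolding lborel_eq_real
  by (rule emeasure_interval_measure_UN_Ioc) (use assms in \<open>auto simp: mono_def\<close>)

lemma emeasure_interval_measure_UN_Ioc_le:
  fixes f :: "real \<Rightarrow> real"
  assumes "mono f" "continuous_on UNIV f" "countable C" "disjoint_family_on (\<lambda>(a, b). {a<..b}) C"
    and slope: "\<And>a b. (a, b) \<in> C \<Longrightarrow> a \<le> b \<and> f b - f a \<le> r * (b - a)" and "0 \<le> r"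
  shows "emeasure (interval_measure f) (\<Union>(a, b)\<in>C. {a<..b}) \<le> ennreal r * emeasure lborel (\<Union>(a, b)\<in>C. {a<..b})"
proof -
  have "emeasure (interval_measure f) (\<Union>(a, b)\<in>C. {a<..b}) = (\<integral>\<^sup>+i. ennreal (f (snd i) - f (fst i)) \<partial>count_space C)"
    using assms by (intro emeasure_interval_measure_UN_Ioc) auto
  also have "\<dots> \<le> (\<integral>\<^sup>+i. ennreal r * ennreal (snd i - fst i) \<partial>count_space C)"
    using slope \<open>0 \<le> r\<close> by (intro nn_integral_mono) (auto simp: ennreal_mult[symmetric] ennreal_leI)
  also have "\<dots> = ennreal r * emeasure lborel (\<Union>(a, b)\<in>C. {a<..b})"
    using assms by (simp add: emeasure_lborel_UN_Ioc nn_integral_cmult)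
  finally show ?thesis .
qed

lemma emeasure_interval_measure_UN_Ioc_ge:
  fixes f :: "real \<Rightarrow> real"
  assumes "mono f" "continuous_on UNIV f" "countable C" "disjoint_family_on (\<lambda>(a, b). {a<..b}) C"
    and slope: "\<And>a b. (a, b) \<in> C \<Longrightarrow> a \<le> b \<and> R * (b - a) \<le> f b - f a" and "0 \<le> R"
  shows "ennreal R * emeasure lborel (\<Union>(a, b)\<in>C. {a<..b}) \<le> emeasure (interval_measure f) (\<Union>(a, b)\<in>C. {a<..b})"
proof -
  have "ennreal R * emeasure lborel (\<Union>(a, b)\<in>C. {a<..b}) = (\<integral>\<^sup>+i. ennreal R * ennreal (snd i - fst i) \<partial>count_space C)"
    using assms by (simp add: emeasure_lborel_UN_Ioc nn_integral_cmult)
  also have "\<dots> \<le> (\<integral>\<^sup>+i. ennreal (f (snd i) - f (fst i)) \<partial>count_space C)"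
    using slope \<open>0 \<le> R\<close> by (intro nn_integral_mono) (auto simp: ennreal_mult[symmetric] ennreal_leI)
  also have "\<dots> = emeasure (interval_measure f) (\<Union>(a, b)\<in>C. {a<..b})"
    using assms by (intro emeasure_interval_measure_UN_Ioc[symmetric]) auto
  finally show ?thesis .
qed

lemma Vitali_covering_frequent_intervals:
  fixes S U :: "real set" and P :: "real \<Rightarrow> real \<Rightarrow> bool"
  assumes U: "open U" "S \<subseteq> U"
    and frequent: "\<And>x. x \<in> S \<Longrightarrow> \<exists>\<^sub>F t in at_right 0. P (x - t) x \<or> P x (x + t)"
  obtains C Z where "countable C" "C \<subseteq> {(a, b). a < b \<and> {a..b} \<subseteq> U \<and> P a b}"
    "disjoint_family_on (\<lambda>(a, b). {a<..b}) C" "Z \<in> null_sets lborel" "S \<subseteq> Z \<union> (\<Union>(a, b)\<in>C. {a<..<b})"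
proof (rule Vitali_covering_intervals)
  fix x d :: real assume "x \<in> S" "0 < d"
  obtain e where e: "0 < e" "ball x e \<subseteq> U"
    using U \<open>x \<in> S\<close> open_contains_ball by blast
  then have "0 < min e d"
    using \<open>0 < d\<close> by simp
  then obtain t where t: "0 < t" "t < min e d" and "P (x - t) x \<or> P x (x + t)"
    using frequent[OF \<open>x \<in> S\<close>] unfolding frequently_at_right_0_iff by blast
  then obtain a b where ab: "a \<le> x" "x \<le> b" "b - a = t" "P a b"
  proof (elim disjE)
    assume "P (x - t) x"
    then show thesis
      using that[of "x - t" x] \<open>0 < t\<close> by simp
  next
    assume "P x (x + t)"
    then show thesis
      using that[of x "x + t"] \<open>0 < t\<close> by simp
  qed
  have "{a..b} \<subseteq> U"
    using e(2) t ab by (auto simp: dist_real_def subset_eq)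
  then show "\<exists>a b. (a, b) \<in> {(a, b). a < b \<and> {a..b} \<subseteq> U \<and> P a b} \<and> x \<in> {a..b} \<and> b - a < d"
    using t ab by (intro exI[of _ a] exI[of _ b]) auto
qed (use that in auto)

lemma emeasure_le_interval_measure_of_right_slope:
  fixes f :: "real \<Rightarrow> real"
  assumes mono: "mono f" and cont: "continuous_on UNIV f" and "0 \<le> R"
    and E: "E \<in> sets lborel" "E \<subseteq> V" "open V"
    and slope: "\<And>x. x \<in> E \<Longrightarrow> \<exists>\<^sub>F t in at_right 0. R * t < f (x + t) - f x"
  shows "ennreal R * emeasure lborel E \<le> emeasure (interval_measure f) V"
proof -
  obtain C Z where C: "countable C" "C \<subseteq> {(a, b). a < b \<and> {a..b} \<subseteq> V \<and> R * (b - a) < f b - f a}"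
      "disjoint_family_on (\<lambda>(a, b). {a<..b}) C"
    and Z: "Z \<in> null_sets lborel" "E \<subseteq> Z \<union> (\<Union>(a, b)\<in>C. {a<..<b})"
  proof (rule Vitali_covering_frequent_intervals[OF E(3,2), where P = "\<lambda>a b. R * (b - a) < f b - f a"])
    fix x assume "x \<in> E"
    show "\<exists>\<^sub>F t in at_right 0. R * (x - (x - t)) < f x - f (x - t) \<or> R * (x + t - x) < f (x + t) - f x"
      using slope[OF \<open>x \<in> E\<close>] by (rule frequently_elim1) simp
  qed
  define W where "W = (\<Union>(a, b)\<in>C. {a<..b})"
  have "W \<in> sets borel"
    using C(1) by (auto simp: W_def split: prod.splits)
  have "(\<Union>(a, b)\<in>C. {a<..<b}) \<subseteq> W"
    by (auto simp: W_def)
  then have "E \<subseteq> W \<union> Z"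
    using Z(2) by blast
  then have "emeasure lborel E \<le> emeasure lborel (W \<union> Z)"
    using null_setsD2[OF Z(1)] \<open>W \<in> sets borel\<close> by (intro emeasure_mono) auto
  also have "\<dots> = emeasure lborel W"
    using Z(1) \<open>W \<in> sets borel\<close> by (intro emeasure_Un_null_set) auto
  finally have "ennreal R * emeasure lborel E \<le> ennreal R * emeasure lborel W"
    by (rule mult_left_mono) simp
  also have "\<dots> \<le> emeasure (interval_measure f) W"
    unfolding W_def using C mono cont \<open>0 \<le> R\<close> by (intro emeasure_interval_measure_UN_Ioc_ge) auto
  also have "\<dots> \<le> emeasure (interval_measure f) V"
    using C(2) E(3) by (intro emeasure_mono) (force simp: W_def)+
  finally show ?thesis .
qed

lemma interval_measure_cover_of_left_slope:
  fixes f :: "real \<Rightarrow> real"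
  assumes mono: "mono f" and cont: "continuous_on UNIV f" and "0 \<le> r"
    and E: "E \<subseteq> U" "open U"
    and slope: "\<And>x. x \<in> E \<Longrightarrow> \<exists>\<^sub>F t in at_right 0. f x - f (x - t) < r * t"
  obtains V Z where "open V" "Z \<in> null_sets lborel" "E \<subseteq> Z \<union> V"
    "emeasure (interval_measure f) V \<le> ennreal r * emeasure lborel U"
proof -
  obtain C Z where C: "countable C" "C \<subseteq> {(a, b). a < b \<and> {a..b} \<subseteq> U \<and> f b - f a < r * (b - a)}"
      "disjoint_family_on (\<lambda>(a, b). {a<..b}) C"
    and Z: "Z \<in> null_sets lborel" "E \<subseteq> Z \<union> (\<Union>(a, b)\<in>C. {a<..<b})"
  proof (rule Vitali_covering_frequent_intervals[OF E(2,1), where P = "\<lambda>a b. f b - f a < r * (b - a)"])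
    fix x assume "x \<in> E"
    show "\<exists>\<^sub>F t in at_right 0. f x - f (x - t) < r * (x - (x - t)) \<or> f (x + t) - f x < r * (x + t - x)"
      using slope[OF \<open>x \<in> E\<close>] by (rule frequently_elim1) simp
  qed
  define W where "W = (\<Union>(a, b)\<in>C. {a<..b})"
  show thesis
  proof (rule that[OF _ Z])
    show "open (\<Union>(a, b)\<in>C. {a<..<b})"
      by auto
    have "emeasure (interval_measure f) (\<Union>(a, b)\<in>C. {a<..<b}) \<le> emeasure (interval_measure f) W"
      using C(1) by (intro emeasure_mono) (auto simp: W_def split: prod.splits)
    also have "\<dots> \<le> ennreal r * emeasure lborel W"
      unfolding W_def using C mono cont \<open>0 \<le> r\<close> by (intro emeasure_interval_measure_UN_Ioc_le) auto
    also have "\<dots> \<le> ennreal r * emeasure lborel U"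
      using C(2) E(2) by (intro mult_left_mono emeasure_mono) (force simp: W_def)+
    finally show "emeasure (interval_measure f) (\<Union>(a, b)\<in>C. {a<..<b}) \<le> ennreal r * emeasure lborel U" .
  qed
qed

lemma dini_gap_set_emeasure_le:
  fixes f :: "real \<Rightarrow> real"
  assumes mono: "mono f" and cont: "continuous_on UNIV f" and rR: "0 \<le> r" "0 \<le> R"
    and E: "E \<subseteq> dini_gap_set f r R" "E \<in> sets lborel" and U: "E \<subseteq> U" "open U"
  shows "ennreal R * emeasure lborel E \<le> ennreal r * emeasure lborel U"
proof -
  obtain V Z where V: "open V" "Z \<in> null_sets lborel" "E \<subseteq> Z \<union> V"
    and "emeasure (interval_measure f) V \<le> ennreal r * emeasure lborel U"
    using interval_measure_cover_of_left_slope[OF mono cont rR(1) U] E(1) by (auto simp: dini_gap_set_def)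
  have "emeasure lborel E \<le> emeasure lborel ((E \<inter> V) \<union> Z)"
    using V E(2) null_setsD2[OF V(2)] by (intro emeasure_mono) auto
  also have "\<dots> = emeasure lborel (E \<inter> V)"
    using V E(2) by (intro emeasure_Un_null_set) auto
  finally have "ennreal R * emeasure lborel E \<le> ennreal R * emeasure lborel (E \<inter> V)"
    by (rule mult_left_mono) simp
  also have "\<dots> \<le> emeasure (interval_measure f) V"
    using E V(1) by (intro emeasure_le_interval_measure_of_right_slope[OF mono cont rR(2)]) (auto simp: dini_gap_set_def)
  finally show ?thesis
    using \<open>emeasure (interval_measure f) V \<le> ennreal r * emeasure lborel U\<close> by order
qed

lemma measure_dini_gap_set_le:
  fixes f :: "real \<Rightarrow> real"
  assumes mono: "mono f" and cont: "continuous_on UNIV f" and rR: "0 \<le> r" "0 \<le> R"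
    and E: "E \<subseteq> dini_gap_set f r R" "E \<in> sets borel" "emeasure lborel E < \<infinity>"
  shows "R * measure lborel E \<le> r * measure lborel E"
proof (rule field_le_epsilon)
  fix e :: real assume "0 < e"
  define m where "m = measure lborel E"
  have Em: "emeasure lborel E = ennreal m" and "0 \<le> m"
    using E(3) by (auto simp: m_def emeasure_eq_ennreal_measure)
  obtain U where U: "open U" "E \<subseteq> U" "emeasure lborel (U - E) < e / (r + 1)"
    using outer_regular_lborel[OF E(2), of "e / (r + 1)"] \<open>0 < e\<close> rR by auto
  have "emeasure lborel U = emeasure lborel E + emeasure lborel (U - E)"
    using U(1,2) E(2) by (subst plus_emeasure) (auto simp: Un_absorb1)
  also have "\<dots> \<le> ennreal (m + e / (r + 1))"
    using Em U(3) \<open>0 \<le> m\<close> \<open>0 < e\<close> rR by simp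
  finally have U_le: "emeasure lborel U \<le> ennreal (m + e / (r + 1))" .
  have "ennreal (R * m) = ennreal R * emeasure lborel E"
    using rR \<open>0 \<le> m\<close> by (simp add: Em ennreal_mult)
  also have "\<dots> \<le> ennreal r * emeasure lborel U"
    using rR U(1,2) E by (intro dini_gap_set_emeasure_le[OF mono cont]) auto
  also have "\<dots> \<le> ennreal (r * (m + e / (r + 1)))"
    using U_le rR \<open>0 \<le> m\<close> \<open>0 < e\<close> by (simp add: ennreal_mult mult_left_mono)
  finally have "R * m \<le> r * m + r / (r + 1) * e"
    using rR \<open>0 \<le> m\<close> \<open>0 < e\<close> by (subst (asm) ennreal_le_iff) (auto simp: distrib_left)
  also have "r / (r + 1) * e \<le> e"
    using rR \<open>0 < e\<close> by (intro mult_left_le_one_le) auto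
  finally show "R * measure lborel E \<le> r * measure lborel E + e"
    by (simp add: m_def)
qed

lemma emeasure_dini_gap_set_Int_Ioo:
  fixes f :: "real \<Rightarrow> real"
  assumes mono: "mono f" and cont: "continuous_on UNIV f" and rR: "0 < r" "r < R"
  shows "emeasure lborel (dini_gap_set f r R \<inter> {a<..<b}) = 0"
proof -
  define E where "E = dini_gap_set f r R \<inter> {a<..<b}"
  have "E \<in> sets borel"
    using dini_gap_set_borel[OF cont] by (simp add: E_def)
  have "emeasure lborel E \<le> emeasure lborel {a..b}"
    by (rule emeasure_mono) (auto simp: E_def)
  then have "emeasure lborel E < \<infinity>"
    by (simp add: emeasure_lborel_Icc_eq order_le_less_trans)
  then have "R * measure lborel E \<le> r * measure lborel E"
    using \<open>E \<in> sets borel\<close> rR by (intro measure_dini_gap_set_le[OF mono cont]) (auto simp: E_def)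
  then have "measure lborel E = 0"
    using rR measure_nonneg[of lborel E] mult_strict_right_mono[of r R "measure lborel E"] by (smt (verit))
  then show ?thesis
    using \<open>emeasure lborel E < \<infinity>\<close> by (simp add: E_def emeasure_eq_ennreal_measure)
qed

lemma negligible_dini_gap_set:
  fixes f :: "real \<Rightarrow> real"
  assumes "mono f" "continuous_on UNIV f" "0 < r" "r < R"
  shows "negligible (dini_gap_set f r R)"
proof -
  have "dini_gap_set f r R \<inter> {- real n<..<real n} \<in> null_sets lborel" for n
    using emeasure_dini_gap_set_Int_Ioo[OF assms] dini_gap_set_borel[OF assms(2)]
    by (auto simp: null_sets_def)
  then have "(\<Union>n. dini_gap_set f r R \<inter> {- real n<..<real n}) \<in> null_sets lborel"
    by blast
  moreover have "(\<Union>n. dini_gap_set f r R \<inter> {- real n<..<real n}) = dini_gap_set f r R"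
  proof -
    have "\<exists>n::nat. x \<in> {- real n<..<real n}" for x :: real
      using reals_Archimedean2[of "\<bar>x\<bar>"] by (metis abs_less_iff greaterThanLessThan_iff minus_less_iff)
    then show ?thesis
      by blast
  qed
  ultimately show ?thesis
    unfolding negligible_iff_null_sets by (metis null_sets_completionI)
qed

lemma frequently_less_of_less_Limsup:
  fixes f :: "_ \<Rightarrow> 'a::complete_linorder"
  assumes "y < Limsup F f"
  shows "\<exists>\<^sub>F x in F. y < f x"
proof (rule ccontr)
  assume "\<not> ?thesis"
  then have "Limsup F f \<le> y"
    by (intro Limsup_bounded) (simp add: not_frequently not_less)
  with assms show False
    by simp
qed

lemma frequently_less_of_Liminf_less:
  fixes f :: "_ \<Rightarrow> 'a::complete_linorder"
  assumes "Liminf F f < y"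
  shows "\<exists>\<^sub>F x in F. f x < y"
proof (rule ccontr)
  assume "\<not> ?thesis"
  then have "y \<le> Liminf F f"
    by (intro Liminf_bounded) (simp add: not_frequently not_less)
  with assms show False
    by simp
qed

lemma ereal_rat_pair_between:
  assumes "a < b"
  obtains q1 q2 :: rat where "a < ereal (of_rat q1)" "q1 < q2" "ereal (of_rat q2) < b"
proof -
  obtain x where x: "a < ereal x" "ereal x < b"
    using ereal_dense2[OF assms] by blast
  obtain y where y: "ereal x < ereal y" "ereal y < b"
    using ereal_dense2[OF x(2)] by blast
  obtain q1 where q1: "x < of_rat q1" "of_rat q1 < y"
    using of_rat_dense y(1) by auto
  obtain q2 where q2: "of_rat q1 < (of_rat q2 :: real)" "of_rat q2 < y"
    using of_rat_dense q1(2) by blast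
  show thesis
  proof
    show "a < ereal (of_rat q1)"
      using x(1) q1(1) by (simp add: order_less_trans)
    show "q1 < q2"
      using q2(1) by (simp add: of_rat_less)
    show "ereal (of_rat q2) < b"
      using q2(2) y(2) by (meson less_ereal.simps(1) order.strict_trans)
  qed
qed

definition diff_quot :: "(real \<Rightarrow> real) \<Rightarrow> real \<Rightarrow> real \<Rightarrow> ereal" where
  "diff_quot f x = (\<lambda>t. ereal ((f (x + t) - f x) / t))"

lemma negligible_left_Liminf_less_right_Limsup:
  fixes f :: "real \<Rightarrow> real"
  assumes mono: "mono f" and cont: "continuous_on UNIV f"
  shows "negligible {x. Liminf (at_left 0) (diff_quot f x) < Limsup (at_right 0) (diff_quot f x)}"
proof -
  define I where "I = {(q1, q2). 0 < q1 \<and> q1 < (q2::rat)}"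
  have "{x. Liminf (at_left 0) (diff_quot f x) < Limsup (at_right 0) (diff_quot f x)}
          \<subseteq> (\<Union>(q1, q2)\<in>I. dini_gap_set f (of_rat q1) (of_rat q2))"
  proof
    fix x assume "x \<in> {x. Liminf (at_left 0) (diff_quot f x) < Limsup (at_right 0) (diff_quot f x)}"
    then obtain q1 q2 where q: "Liminf (at_left 0) (diff_quot f x) < ereal (of_rat q1)" "q1 < q2"
      "ereal (of_rat q2) < Limsup (at_right 0) (diff_quot f x)"
      using ereal_rat_pair_between by blast
    have "0 \<le> diff_quot f x t" for t
      using mono by (cases t "0::real" rule: linorder_cases)
        (auto simp: diff_quot_def monoD divide_nonneg_pos divide_nonpos_neg)
    then have "0 \<le> Liminf (at_left 0) (diff_quot f x)"
      by (intro Liminf_bounded always_eventually) simp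
    then have "(0::ereal) < ereal (of_rat q1)"
      using q(1) by (rule le_less_trans)
    then have "0 < q1"
      by simp
    have "\<exists>\<^sub>F t in at_left 0. (f (x + t) - f x) / t < of_rat q1"
      using frequently_less_of_Liminf_less[OF q(1)] by (simp add: diff_quot_def)
    then have "\<exists>\<^sub>F t in at_right 0. (f (x - t) - f x) / - t < of_rat q1 \<and> 0 < t"
      unfolding frequently_at_left_0_iff by (intro frequently_eventually_frequently eventually_at_right_less) simp
    then have left: "\<exists>\<^sub>F t in at_right 0. f x - f (x - t) < of_rat q1 * t"
      by (rule frequently_elim1) (auto simp: field_simps)
    have "\<exists>\<^sub>F t in at_right 0. of_rat q2 < (f (x + t) - f x) / t \<and> 0 < t"
      using frequently_less_of_less_Limsup[OF q(3)]
      by (intro frequently_eventually_frequently eventually_at_right_less) (simp add: diff_quot_def)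
    then have right: "\<exists>\<^sub>F t in at_right 0. of_rat q2 * t < f (x + t) - f x"
      by (rule frequently_elim1) (auto simp: field_simps)
    show "x \<in> (\<Union>(q1, q2)\<in>I. dini_gap_set f (of_rat q1) (of_rat q2))"
      using left right \<open>0 < q1\<close> q(2) by (auto simp: I_def dini_gap_set_def)
  qed
  moreover have "negligible (\<Union>(q1, q2)\<in>I. dini_gap_set f (of_rat q1) (of_rat q2))"
    using mono cont by (intro negligible_countable_Union) (auto simp: I_def of_rat_less intro!: negligible_dini_gap_set)
  ultimately show ?thesis
    by (rule negligible_subset[rotated])
qed

lemma differentiable_of_dini_derivatives_crossing:
  fixes f :: "real \<Rightarrow> real"
  assumes right_left: "Limsup (at_right 0) (diff_quot f x) \<le> Liminf (at_left 0) (diff_quot f x)"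
    and left_right: "Limsup (at_left 0) (diff_quot f x) \<le> Liminf (at_right 0) (diff_quot f x)"
    and lip: "\<And>t. \<bar>f (x + t) - f x\<bar> \<le> K * \<bar>t\<bar>"
  shows "f differentiable (at x)"
proof -
  let ?Q = "diff_quot f x"
  have "Liminf (at_right 0) ?Q \<le> Limsup (at_right 0) ?Q" "Liminf (at_left 0) ?Q \<le> Limsup (at_left 0) ?Q"
    by (simp_all add: Liminf_le_Limsup)
  then have eq: "Liminf (at_right 0) ?Q = Limsup (at_right 0) ?Q"
    "Liminf (at_left 0) ?Q = Limsup (at_right 0) ?Q" "Limsup (at_left 0) ?Q = Limsup (at_right 0) ?Q"
    using right_left left_right by (auto intro: antisym)
  have "0 \<le> K"
    using lip[of 1] by linarith
  have bound: "\<bar>(f (x + t) - f x) / t\<bar> \<le> K" for t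
    using lip[of t] \<open>0 \<le> K\<close> by (cases "t = 0") (auto simp: divide_le_eq)
  have "- ereal K \<le> ?Q t" "?Q t \<le> ereal K" for t
    unfolding diff_quot_def using abs_le_D1[OF bound[of t]] abs_le_D2[OF bound[of t]] by auto
  then have "- ereal K \<le> Liminf (at_right 0) ?Q" "Limsup (at_right 0) ?Q \<le> ereal K"
    by (auto intro: Liminf_bounded Limsup_bounded)
  then obtain D where D: "Limsup (at_right 0) ?Q = ereal D"
    using eq(1) by (cases "Limsup (at_right 0) ?Q") auto
  have "(?Q \<longlongrightarrow> ereal D) (at_right 0)" "(?Q \<longlongrightarrow> ereal D) (at_left 0)"
    using eq D by (auto intro: Liminf_eq_Limsup)
  then have "((\<lambda>t. (f (x + t) - f x) / t) \<longlongrightarrow> D) (at_right 0)"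
    "((\<lambda>t. (f (x + t) - f x) / t) \<longlongrightarrow> D) (at_left 0)"
    by (simp_all add: diff_quot_def)
  then have "(f has_real_derivative D) (at x)"
    unfolding DERIV_def by (rule filterlim_split_at[rotated])
  then show ?thesis
    unfolding real_differentiable_def by blast
qed

lemma negligible_lipschitz_image:
  fixes f :: "'a::euclidean_space \<Rightarrow> 'a"
  assumes "K-lipschitz_on S f" "negligible S"
  shows "negligible (f ` S)"
proof (rule negligible_locally_Lipschitz_image[OF order_refl assms(2)])
  fix x assume "x \<in> S"
  then show "\<exists>T B. open T \<and> x \<in> T \<and> (\<forall>y\<in>S \<inter> T. norm (f y - f x) \<le> B * norm (y - x))"
    using lipschitz_onD[OF assms(1)] by (intro exI[of _ UNIV] exI[of _ K]) (auto simp: dist_norm)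
qed

lemma diff_quot_reflect: "diff_quot (\<lambda>y. - f (- y)) x = (\<lambda>t. diff_quot f (- x) (- t))"
  by (simp add: diff_quot_def fun_eq_iff minus_divide_left add.commute)

lemma negligible_right_Liminf_less_left_Limsup:
  fixes f :: "real \<Rightarrow> real"
  assumes mono: "mono f" and cont: "continuous_on UNIV f"
  shows "negligible {x. Liminf (at_right 0) (diff_quot f x) < Limsup (at_left 0) (diff_quot f x)}"
proof -
  define g where "g y = - f (- y)" for y
  have "mono g"
    using mono by (simp add: g_def mono_def)
  moreover have "continuous_on UNIV g"
    unfolding g_def by (intro continuous_intros continuous_on_compose2[OF cont]) auto
  ultimately have "negligible {y. Liminf (at_left 0) (diff_quot g y) < Limsup (at_right 0) (diff_quot g y)}"
    by (rule negligible_left_Liminf_less_right_Limsup)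
  then have "negligible (uminus ` {y. Liminf (at_left 0) (diff_quot g y) < Limsup (at_right 0) (diff_quot g y)})"
    by (rule negligible_lipschitz_image[rotated, where K = 1]) (simp add: lipschitz_on_def dist_norm norm_minus_commute)
  moreover have "filtermap uminus (at_left 0) = at_right (0::real)" "filtermap uminus (at_right 0) = at_left (0::real)"
    by (simp add: at_right_minus, simp add: at_left_minus)
  then have "Liminf (at_left 0) (diff_quot g y) = Liminf (at_right 0) (diff_quot f (- y))"
    "Limsup (at_right 0) (diff_quot g y) = Limsup (at_left 0) (diff_quot f (- y))" for y
    unfolding g_def diff_quot_reflect using Liminf_filtermap_eq[of uminus "at_left 0" "diff_quot f (- y)"]
      Limsup_filtermap_eq[of uminus "at_right 0" "diff_quot f (- y)"] by simp_all
  then have "uminus ` {y. Liminf (at_left 0) (diff_quot g y) < Limsup (at_right 0) (diff_quot g y)}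
               = {x. Liminf (at_right 0) (diff_quot f x) < Limsup (at_left 0) (diff_quot f x)}"
    by (auto intro!: image_eqI[where x="- x" for x])
  ultimately show ?thesis
    by simp
qed

lemma negligible_not_differentiable_mono:
  fixes f :: "real \<Rightarrow> real"
  assumes mono: "mono f" and lip: "K-lipschitz_on UNIV f"
  shows "negligible {x. \<not> f differentiable (at x)}"
proof -
  have cont: "continuous_on UNIV f"
    using lip by (rule lipschitz_on_continuous_on)
  have "{x. \<not> f differentiable (at x)}
      \<subseteq> {x. Liminf (at_right 0) (diff_quot f x) < Limsup (at_left 0) (diff_quot f x)}
          \<union> {x. Liminf (at_left 0) (diff_quot f x) < Limsup (at_right 0) (diff_quot f x)}"
  proof (rule subsetI, rule ccontr)
    fix x assume "x \<in> {x. \<not> f differentiable (at x)}" and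
      "x \<notin> {x. Liminf (at_right 0) (diff_quot f x) < Limsup (at_left 0) (diff_quot f x)}
          \<union> {x. Liminf (at_left 0) (diff_quot f x) < Limsup (at_right 0) (diff_quot f x)}"
    moreover have "\<bar>f (x + t) - f x\<bar> \<le> K * \<bar>t\<bar>" for t
      using lipschitz_onD[OF lip, of "x + t" x] by (simp add: dist_real_def)
    ultimately show False
      using differentiable_of_dini_derivatives_crossing[of f x K] by (auto simp: not_less)
  qed
  moreover have "negligible ({x. Liminf (at_right 0) (diff_quot f x) < Limsup (at_left 0) (diff_quot f x)}
          \<union> {x. Liminf (at_left 0) (diff_quot f x) < Limsup (at_right 0) (diff_quot f x)})"
    using mono cont
    by (intro negligible_Un negligible_right_Liminf_less_left_Limsup negligible_left_Liminf_less_right_Limsup)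
  ultimately show ?thesis
    by (rule negligible_subset[rotated])
qed

lemma negligible_not_differentiable_lipschitz:
  fixes f :: "real \<Rightarrow> real"
  assumes lip: "K-lipschitz_on UNIV f"
  shows "negligible {x. \<not> f differentiable (at x)}"
proof -
  have K: "0 \<le> K"
    using lip by (rule lipschitz_on_nonneg)
  define h where "h x = f x + K * x" for x
  have "mono h"
  proof (rule monoI)
    fix x y :: real assume "x \<le> y"
    then show "h x \<le> h y"
      using lipschitz_onD[OF lip, of y x] by (simp add: h_def dist_real_def abs_le_iff algebra_simps)
  qed
  moreover have "(K + K * 1)-lipschitz_on UNIV h"
    unfolding h_def by (intro lipschitz_on_add lip lipschitz_on_cmult_real_nonneg lipschitz_on_id K)
  moreover have "f differentiable (at x)" if "h differentiable (at x)" for x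
  proof -
    have "(\<lambda>x. h x - K * x) differentiable (at x)"
      using that by (intro differentiable_diff differentiable_mult) auto
    then show ?thesis
      by (simp add: h_def)
  qed
  then have "{x. \<not> f differentiable (at x)} \<subseteq> {x. \<not> h differentiable (at x)}"
    by blast
  ultimately show ?thesis
    using negligible_not_differentiable_mono by (blast intro: negligible_subset)
qed

lemma continuous_on_first_crossing:
  fixes h :: "real \<Rightarrow> real"
  assumes cont: "continuous_on {A..B} h" and "A \<le> B" and v: "h A < v" "v \<le> h B"
  obtains x where "A < x" "x \<le> B" "h x = v" "\<And>y. A \<le> y \<Longrightarrow> y < x \<Longrightarrow> h y < v"
proof -
  define S where "S = {x \<in> {A..B}. v \<le> h x}"
  have "B \<in> S" "bdd_below S"
    using v \<open>A \<le> B\<close> by (auto simp: S_def bdd_below_def)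
  moreover have "closed S"
    unfolding S_def by (intro continuous_on_closed_Collect_le cont continuous_on_const) auto
  ultimately have "Inf S \<in> S"
    by (intro closed_contains_Inf) auto
  have below: "h y < v" if "A \<le> y" "y < Inf S" for y
  proof (rule ccontr)
    assume "\<not> h y < v"
    then have "y \<in> S"
      using that \<open>Inf S \<in> S\<close> by (auto simp: S_def)
    then show False
      using cInf_lower[OF _ \<open>bdd_below S\<close>] that(2) by fastforce
  qed
  have "A < Inf S"
    using \<open>Inf S \<in> S\<close> v(1) by (auto simp: S_def order.order_iff_strict)
  moreover have "h (Inf S) = v"
  proof (rule ccontr)
    assume "h (Inf S) \<noteq> v"
    then have "v < h (Inf S)"
      using \<open>Inf S \<in> S\<close> by (auto simp: S_def)
    then obtain y where "A \<le> y" "y \<le> Inf S" "h y = v"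
      using IVT'[of h A v "Inf S"] v(1) \<open>A < Inf S\<close> continuous_on_subset[OF cont] \<open>Inf S \<in> S\<close>
      by (auto simp: S_def)
    then show False
      using below[of y] \<open>v < h (Inf S)\<close> by (cases "y = Inf S") auto
  qed
  ultimately show thesis
    using that below \<open>Inf S \<in> S\<close> by (auto simp: S_def)
qed

lemma greaterThanLessThan_subset_image_of_deriv_neg:
  fixes h :: "real \<Rightarrow> real"
  assumes cont: "continuous_on {A..B} h" and "A \<le> B"
    and deriv: "\<And>x. A < x \<Longrightarrow> x < B \<Longrightarrow> x \<notin> N \<Longrightarrow> \<exists>l<0. (h has_real_derivative l) (at x)"
  shows "{h A<..<h B} \<subseteq> h ` N"
proof
  fix v assume v: "v \<in> {h A<..<h B}"
  then have "h A < v" "v \<le> h B"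
    by auto
  then obtain x where x: "A < x" "x \<le> B" "h x = v" and below: "\<And>y. A \<le> y \<Longrightarrow> y < x \<Longrightarrow> h y < v"
    by (rule continuous_on_first_crossing[OF cont \<open>A \<le> B\<close>]) auto
  have "x \<in> N"
  proof (rule ccontr)
    assume "x \<notin> N"
    moreover have "x < B"
      using x v by (auto simp: order.order_iff_strict)
    ultimately obtain l where "l < 0" "(h has_real_derivative l) (at x)"
      using deriv \<open>A < x\<close> by blast
    then obtain d where "0 < d" "\<And>t. 0 < t \<Longrightarrow> t < d \<Longrightarrow> h x < h (x - t)"
      using DERIV_neg_dec_left by blast
    moreover define t where "t = min (d / 2) (x - A)"
    ultimately have "h x < h (x - t)"
      using \<open>A < x\<close> by (simp add: t_def)
    moreover have "h (x - t) < v"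
      using below[of "x - t"] \<open>A < x\<close> \<open>0 < d\<close> by (simp add: t_def)
    ultimately show False
      using x(3) by simp
  qed
  then show "v \<in> h ` N"
    using x(3) by blast
qed

lemma lipschitz_slope_le_of_AE_deriv_less:
  fixes F :: "real \<Rightarrow> real"
  assumes lip: "K-lipschitz_on UNIV F" and "A \<le> B"
    and ae: "AE x in lborel. A < x \<longrightarrow> x < B \<longrightarrow> F differentiable (at x) \<longrightarrow> deriv F x < c"
  shows "F B - F A \<le> c * (B - A)"
proof (rule ccontr)
  assume "\<not> F B - F A \<le> c * (B - A)"
  define h where "h x = F x - c * x" for x
  have "h A < h B"
    using \<open>\<not> F B - F A \<le> c * (B - A)\<close> by (simp add: h_def algebra_simps)
  have lip_h: "(K + \<bar>- c\<bar> * 1)-lipschitz_on UNIV h"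
    unfolding h_def diff_conv_add_uminus minus_mult_left
    by (intro lipschitz_on_add lip lipschitz_on_cmult_real lipschitz_on_id)
  obtain Z where Z: "Z \<in> null_sets lborel"
    "{x. \<not> (A < x \<longrightarrow> x < B \<longrightarrow> F differentiable (at x) \<longrightarrow> deriv F x < c)} \<subseteq> Z"
    using ae unfolding eventually_ae_filter by auto
  define N where "N = {x. \<not> F differentiable (at x)} \<union> Z"
  have "negligible N"
    unfolding N_def using negligible_not_differentiable_lipschitz[OF lip] Z(1)
    by (intro negligible_Un) (auto simp: negligible_iff_null_sets null_sets_completionI)
  have "{h A<..<h B} \<subseteq> h ` N"
  proof (rule greaterThanLessThan_subset_image_of_deriv_neg[OF _ \<open>A \<le> B\<close>])
    show "continuous_on {A..B} h"
      using lipschitz_on_continuous_on[OF lip_h] by (rule continuous_on_subset) simp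
    fix x assume "A < x" "x < B" "x \<notin> N"
    then have "F differentiable (at x)" "deriv F x < c"
      using Z(2) by (auto simp: N_def)
    then have "(h has_real_derivative deriv F x - c) (at x)"
      unfolding h_def by (auto intro!: derivative_eq_intros simp: DERIV_deriv_iff_real_differentiable)
    then show "\<exists>l<0. (h has_real_derivative l) (at x)"
      using \<open>deriv F x < c\<close> by (intro exI[of _ "deriv F x - c"]) simp
  qed
  moreover have "negligible (h ` N)"
    using lipschitz_on_subset[OF lip_h] \<open>negligible N\<close> by (intro negligible_lipschitz_image) auto
  ultimately have "negligible {h A<..<h B}"
    by (rule negligible_subset[rotated])
  then show False
    using open_not_negligible[of "{h A<..<h B}"] \<open>h A < h B\<close> by auto
qed

section \<open>One-sided slope of \<open>p\<close> in \<open>N\<close> from the essential supremum of \<open>\<partial>\<^sub>N p\<close>\<close>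

lemma AE_partialN_less_of_gammaP_less:
  assumes "gammaP p < ereal c"
  shows "AE x in lborel. x \<in> {0<..} \<times> {0<..} \<longrightarrow> partialN p x < c"
proof -
  let ?M = "restrict_space lborel ({0<..} \<times> {0<..} :: (real \<times> real) set)"
  have "(\<lambda>x. ereal (partialN p x)) \<in> borel_measurable ?M"
  proof (rule ccontr)
    assume "\<not> ?thesis"
    then have "gammaP p = top"
      unfolding gammaP_def by (rule esssup_non_measurable)
    then show False
      using assms by simp
  qed
  then have "Limsup (ae_filter ?M) (\<lambda>x. ereal (partialN p x)) < ereal c"
    using assms unfolding gammaP_def esssup_def by simp
  then have "AE x in ?M. partialN p x < c"
    using Limsup_lessD by fastforce
  moreover have "({0<..} \<times> {0<..} :: (real \<times> real) set) \<inter> space lborel \<in> sets lborel"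
    by (simp add: borel_open open_Times)
  ultimately show ?thesis
    by (simp add: AE_restrict_space_iff)
qed

lemma lipschitz_on_quadrant_slices:
  fixes p :: "real \<Rightarrow> real \<Rightarrow> real"
  assumes "L-lipschitz_on quadrant (\<lambda>x. p (fst x) (snd x))"
  shows lipschitz_on_quadrant_slice_N: "0 \<le> s \<Longrightarrow> L-lipschitz_on {0..} (p s)"
    and lipschitz_on_quadrant_slice_s: "0 \<le> N \<Longrightarrow> L-lipschitz_on {0..} (\<lambda>s. p s N)"
proof -
  have "dist (s, a) (s, b) = dist a b" "dist (a, N) (b, N) = dist a b" for s N a b :: real
    by (simp_all add: dist_Pair_Pair dist_real_def)
  then show "0 \<le> s \<Longrightarrow> L-lipschitz_on {0..} (p s)" "0 \<le> N \<Longrightarrow> L-lipschitz_on {0..} (\<lambda>s. p s N)"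
    using lipschitz_onD[OF assms, of "(s, _)" "(s, _)"] lipschitz_onD[OF assms, of "(_, N)" "(_, N)"]
      lipschitz_on_nonneg[OF assms]
    by (auto intro!: lipschitz_onI simp: quadrant_def)
qed

lemma slope_le_of_AE_partialN_less:
  fixes p :: "real \<Rightarrow> real \<Rightarrow> real"
  assumes lip: "L-lipschitz_on {0..} (p s)" and AB: "0 \<le> A" "A \<le> B"
    and ae: "AE N in lborel. 0 < N \<longrightarrow> partialN p (s, N) < c"
  shows "p s B - p s A \<le> c * (B - A)"
proof -
  define G where "G N = p s (max N 0)" for N
  have "L-lipschitz_on UNIV G"
  proof (rule lipschitz_onI)
    fix x y :: real
    have "dist (G x) (G y) \<le> L * dist (max x 0) (max y 0)"
      unfolding G_def using lipschitz_onD[OF lip] by simp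
    also have "\<dots> \<le> L * dist x y"
      using lipschitz_on_nonneg[OF lip] by (intro mult_left_mono) (auto simp: dist_real_def)
    finally show "dist (G x) (G y) \<le> L * dist x y" .
  qed (use lipschitz_on_nonneg[OF lip] in simp)
  moreover have "AE N in lborel. A < N \<longrightarrow> N < B \<longrightarrow> G differentiable (at N) \<longrightarrow> deriv G N < c"
    using ae
  proof eventually_elim
    case (elim N)
    show ?case
    proof (intro impI)
      assume N: "A < N" "N < B" and "G differentiable (at N)"
      then have "(G has_real_derivative deriv G N) (at N)"
        by (simp add: DERIV_deriv_iff_real_differentiable)
      then have "(p s has_real_derivative deriv G N) (at N)"
        by (rule has_field_derivative_transform_within_open[of _ _ _ "{0<..}"]) (use N AB in \<open>auto simp: G_def\<close>)
      then have "partialN p (s, N) = deriv G N"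
        unfolding partialN_def by (auto simp: DERIV_imp_deriv real_differentiable_def)
      then show "deriv G N < c"
        using elim N AB by simp
    qed
  qed
  ultimately have "G B - G A \<le> c * (B - A)"
    using AB by (intro lipschitz_slope_le_of_AE_deriv_less) auto
  then show ?thesis
    using AB by (simp add: G_def)
qed

lemma frequently_at_right_not_in_null_set:
  fixes s :: real
  assumes "Z \<in> null_sets lborel"
  shows "\<exists>\<^sub>F x in at_right s. x \<notin> Z"
proof -
  have "\<exists>x. s < x \<and> x < s + d \<and> x \<notin> Z" if "0 < d" for d
  proof (rule ccontr)
    assume "\<not> ?thesis"
    then have "emeasure lborel {s<..<s + d} \<le> emeasure lborel Z"
      using assms by (intro emeasure_mono) auto
    moreover have "emeasure lborel {s<..<s + d} = ennreal d"
      using that by simp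
    ultimately show False
      using assms that by (simp add: null_setsD1)
  qed
  then show ?thesis
    unfolding frequently_at dist_real_def
    by (metis add.commute diff_less_eq abs_of_pos greaterThan_iff less_irrefl diff_gt_0_iff_gt)
qed

lemma le_of_frequently_at_right_le:
  fixes \<phi> :: "real \<Rightarrow> real"
  assumes "continuous (at_right s) \<phi>" "\<exists>\<^sub>F x in at_right s. \<phi> x \<le> C"
  shows "\<phi> s \<le> C"
proof (rule ccontr)
  assume "\<not> \<phi> s \<le> C"
  then have "\<forall>\<^sub>F x in at_right s. C < \<phi> x"
    using assms(1) unfolding continuous_within by (intro order_tendstoD) auto
  then show False
    using assms(2) by (simp add: frequently_def eventually_mono not_le)
qed

lemma slope_le_of_gammaP_less:
  fixes p :: "real \<Rightarrow> real \<Rightarrow> real"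
  assumes lip: "L-lipschitz_on quadrant (\<lambda>x. p (fst x) (snd x))" and gamma: "gammaP p < ereal c"
    and s: "0 < s" and AB: "0 \<le> A" "A \<le> B"
  shows "p s B - p s A \<le> c * (B - A)"
proof (rule le_of_frequently_at_right_le[where \<phi> = "\<lambda>s'. p s' B - p s' A"])
  have "AE x in lborel \<Otimes>\<^sub>M lborel. x \<in> {0<..} \<times> {0<..} \<longrightarrow> partialN p x < c"
    unfolding lborel_prod by (rule AE_partialN_less_of_gammaP_less[OF gamma])
  then have "AE s' in lborel. AE N in lborel. (s', N) \<in> {0<..} \<times> {0<..} \<longrightarrow> partialN p (s', N) < c"
    by (rule pair_sigma_finite.AE_pair[rotated]) (simp add: pair_sigma_finite_def lborel.sigma_finite_measure_axioms)
  then obtain Z where Z: "Z \<in> null_sets lborel"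
    and good: "\<And>s'. s' \<notin> Z \<Longrightarrow> AE N in lborel. (s', N) \<in> {0<..} \<times> {0<..} \<longrightarrow> partialN p (s', N) < c"
    by (elim AE_E) (auto simp: null_sets_def)
  have "p s' B - p s' A \<le> c * (B - A)" if "s < s'" "s' \<notin> Z" for s'
    using good[OF that(2)] that(1) s
    by (intro slope_le_of_AE_partialN_less[OF lipschitz_on_quadrant_slice_N[OF lip] AB]) auto
  then show "\<exists>\<^sub>F s' in at_right s. p s' B - p s' A \<le> c * (B - A)"
    using frequently_eventually_frequently[OF frequently_at_right_not_in_null_set[OF Z] eventually_at_right_less]
    by (rule frequently_elim1[rotated]) auto
  have "continuous_on {0..} (\<lambda>s'. p s' B - p s' A)"
    using AB lipschitz_on_continuous_on[OF lipschitz_on_quadrant_slice_s[OF lip]] by (intro continuous_on_diff) auto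
  then have "continuous (at s within {0..}) (\<lambda>s'. p s' B - p s' A)"
    using s by (intro continuous_on_imp_continuous_within) auto
  then show "continuous (at_right s) (\<lambda>s'. p s' B - p s' A)"
    by (rule continuous_within_subset) (use s in auto)
qed

section \<open>Total variation of the upwind scheme\<close>

lemma sgrid_pos: "0 < ds \<Longrightarrow> 0 < sgrid ds (Suc j)"
  unfolding sgrid_def by (simp add: field_simps add_pos_nonneg)

lemma sgrid_Suc_diff: "sgrid ds (Suc j) - sgrid ds j = ds"
  unfolding sgrid_def by (simp add: field_simps)

definition tv :: "(nat \<Rightarrow> real) \<Rightarrow> real" where
  "tv u = (\<Sum>j. \<bar>u (Suc j) - u j\<bar>)"

lemma discrete_gronwall_exp:
  fixes T :: "nat \<Rightarrow> real"
  assumes step: "\<And>k. T (Suc k) \<le> (1 + h * a) * T k + h * b" and T_nonneg: "\<And>k. 0 \<le> T k"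
    and h: "0 \<le> h" and a: "0 \<le> a" "a \<le> C1" and C1: "0 < C1" and b: "0 \<le> b" "b / C1 \<le> C2"
  shows "T k \<le> exp (C1 * (real k * h)) * T 0 + C2 * (exp (C1 * (real k * h)) - 1)"
proof (induction k)
  case 0
  show ?case
    by simp
next
  case (Suc k)
  define E where "E = exp (C1 * (real k * h))"
  define G where "G = exp (C1 * h)"
  have "1 \<le> E"
    using C1 h by (simp add: E_def)
  have "0 \<le> C2"
    using b C1 by (smt (verit) divide_nonneg_pos)
  have "b \<le> C2 * C1"
    using b C1 by (simp add: divide_le_eq)
  then have "h * b \<le> C2 * (C1 * h)"
    using mult_left_mono[of b "C2 * C1" h] h by (simp add: ac_simps)
  also have "\<dots> \<le> C2 * (G - 1)"
    using mult_left_mono[OF _ \<open>0 \<le> C2\<close>, of "C1 * h" "G - 1"] exp_ge_add_one_self[of "C1 * h"]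
    by (simp add: G_def)
  finally have hb: "h * b \<le> C2 * (G - 1)" .
  have "h * a \<le> C1 * h"
    using mult_left_mono[OF a(2) h] by (simp add: mult.commute)
  then have "1 + h * a \<le> G"
    using exp_ge_add_one_self[of "C1 * h"] unfolding G_def by linarith
  then have "T (Suc k) \<le> G * T k + h * b"
    using step[of k] mult_right_mono[OF _ T_nonneg[of k]] by (smt (verit))
  also have "\<dots> \<le> G * (E * T 0 + C2 * (E - 1)) + C2 * (G - 1)"
    using Suc.IH hb by (intro add_mono mult_left_mono) (auto simp: E_def G_def)
  also have "\<dots> = (E * G) * T 0 + C2 * (E * G - 1)"
    by (simp add: algebra_simps)
  also have "E * G = exp (C1 * (real (Suc k) * h))"
    by (simp add: E_def G_def exp_add[symmetric] algebra_simps)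
  finally show ?case .
qed

locale upwind_scheme =
  fixes p :: "real \<Rightarrow> real \<Rightarrow> real" and P L c M ds dt :: real
  assumes ds_pos: "0 < ds" and dt_pos: "0 < dt" and cfl: "dt * (1 / ds + P) \<le> 1"
    and p_bounds: "\<And>s N. 0 < s \<Longrightarrow> 0 \<le> N \<Longrightarrow> 0 \<le> p s N \<and> p s N \<le> P"
    and p_lipschitz_s: "\<And>s s' N. 0 < s \<Longrightarrow> 0 < s' \<Longrightarrow> 0 \<le> N \<Longrightarrow> \<bar>p s N - p s' N\<bar> \<le> L * \<bar>s - s'\<bar>"
    and p_slope_N: "\<And>s N N'. 0 < M \<Longrightarrow> 0 < s \<Longrightarrow> 0 \<le> N \<Longrightarrow> N \<le> N' \<Longrightarrow> p s N' - p s N \<le> c * (N' - N)"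
    and L_nonneg: "0 \<le> L" and c_nonneg: "0 \<le> c" and M_nonneg: "0 \<le> M" and cM_less: "c * M < 1"
begin

lemma P_nonneg: "0 \<le> P"
  using p_bounds[of 1 0] by simp

text \<open>A state of the scheme; the boundary value \<open>N\<^sup>m\<close> is stored as \<open>u 0\<close>.\<close>

definition admissible :: "(nat \<Rightarrow> real) \<Rightarrow> bool" where
  "admissible u \<longleftrightarrow> 0 \<le> u 0 \<and> (\<forall>j. 0 \<le> u (Suc j)) \<and> (\<lambda>j. ds * u (Suc j)) sums M \<and>
     (\<lambda>j. ds * p (sgrid ds (Suc j)) (u 0) * u (Suc j)) sums u 0"

text \<open>\<open>upwind u j\<close> is the updated value in cell \<open>j + 1\<close>.\<close>

definition upwind :: "(nat \<Rightarrow> real) \<Rightarrow> nat \<Rightarrow> real" where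
  "upwind u j = u (Suc j) - dt / ds * (u (Suc j) - u j) - dt * p (sgrid ds (Suc j)) (u 0) * u (Suc j)"

abbreviation weight :: "(nat \<Rightarrow> real) \<Rightarrow> nat \<Rightarrow> real" where
  "weight u j \<equiv> 1 - dt / ds - dt * p (sgrid ds (Suc j)) (u 0)"

lemma upwind_eq_convex_combination: "upwind u j = weight u j * u (Suc j) + dt / ds * u j"
  by (simp add: upwind_def algebra_simps)

lemma weight_bounds:
  assumes "0 \<le> u 0"
  shows "0 \<le> weight u j" "weight u j \<le> 1 - dt / ds"
proof -
  have q: "0 \<le> p (sgrid ds (Suc j)) (u 0)" "p (sgrid ds (Suc j)) (u 0) \<le> P"
    using p_bounds[OF sgrid_pos[OF ds_pos] assms] by auto
  have "dt / ds + dt * P \<le> 1"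
    using cfl by (simp add: field_simps)
  then show "0 \<le> weight u j"
    using mult_left_mono[OF q(2), of dt] dt_pos by linarith
  show "weight u j \<le> 1 - dt / ds"
    using q(1) dt_pos by simp
qed

lemma admissible_nonneg: "admissible u \<Longrightarrow> 0 \<le> u j"
  by (cases j) (auto simp: admissible_def)

lemma admissible_boundary_le:
  assumes "admissible u"
  shows "u 0 \<le> P * M"
proof (rule sums_le[of "\<lambda>j. ds * p (sgrid ds (Suc j)) (u 0) * u (Suc j)" "\<lambda>j. P * (ds * u (Suc j))"])
  fix j
  have "p (sgrid ds (Suc j)) (u 0) * (ds * u (Suc j)) \<le> P * (ds * u (Suc j))"
    using p_bounds[OF sgrid_pos[OF ds_pos], of "u 0" j] admissible_nonneg[OF assms] ds_pos
    by (intro mult_right_mono) auto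
  then show "ds * p (sgrid ds (Suc j)) (u 0) * u (Suc j) \<le> P * (ds * u (Suc j))"
    by (simp add: ac_simps)
  show "(\<lambda>j. ds * p (sgrid ds (Suc j)) (u 0) * u (Suc j)) sums u 0"
    using assms by (simp add: admissible_def)
  show "(\<lambda>j. P * (ds * u (Suc j))) sums (P * M)"
    using assms unfolding admissible_def by (intro sums_mult) simp
qed

lemma upwind_nonneg:
  assumes "admissible u"
  shows "0 \<le> upwind u j"
proof -
  have "0 \<le> weight u j" "0 \<le> u (Suc j)" "0 \<le> u j"
    using weight_bounds(1) admissible_nonneg[OF assms] assms by (auto simp: admissible_def)
  then show ?thesis
    unfolding upwind_eq_convex_combination using ds_pos dt_pos by simp
qed

lemma upwind_sums_mass:
  assumes "admissible u"
  shows "(\<lambda>j. ds * upwind u j) sums M"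
proof -
  have mass: "(\<lambda>j. ds * u (Suc j)) sums M" and flux: "(\<lambda>j. ds * p (sgrid ds (Suc j)) (u 0) * u (Suc j)) sums u 0"
    using assms by (auto simp: admissible_def)
  have "(\<lambda>j. (1 / ds) * (ds * u (Suc j))) \<longlonglongrightarrow> (1 / ds) * 0"
    using mass by (intro tendsto_mult tendsto_const summable_LIMSEQ_zero sums_summable)
  then have "(\<lambda>j. u (Suc j)) \<longlonglongrightarrow> 0"
    using ds_pos by simp
  then have "(\<lambda>j. u (Suc j) - u j) sums (0 - u 0)"
    by (intro telescope_sums) (simp add: LIMSEQ_imp_Suc)
  then have "(\<lambda>j. ds * u (Suc j) - dt * (u (Suc j) - u j) - dt * (ds * p (sgrid ds (Suc j)) (u 0) * u (Suc j)))
               sums (M - dt * (0 - u 0) - dt * u 0)"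
    by (intro sums_diff[OF sums_diff[OF mass]] sums_mult flux)
  moreover have "(\<lambda>j. ds * upwind u j)
      = (\<lambda>j. ds * u (Suc j) - dt * (u (Suc j) - u j) - dt * (ds * p (sgrid ds (Suc j)) (u 0) * u (Suc j)))"
    using ds_pos by (simp add: upwind_def fun_eq_iff field_simps)
  ultimately show ?thesis
    by simp
qed

lemma upwind_interior_diff:
  assumes "admissible u"
  shows "\<bar>upwind u (Suc j) - upwind u j\<bar>
           \<le> (1 - dt / ds) * \<bar>u (Suc (Suc j)) - u (Suc j)\<bar> + dt / ds * \<bar>u (Suc j) - u j\<bar>
              + dt * L * (ds * u (Suc j))"
proof -
  define q where "q k = p (sgrid ds k) (u 0)" for k
  have "upwind u (Suc j) - upwind u j = weight u (Suc j) * (u (Suc (Suc j)) - u (Suc j))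
      + dt / ds * (u (Suc j) - u j) - dt * (q (Suc (Suc j)) - q (Suc j)) * u (Suc j)"
    by (simp add: upwind_def q_def algebra_simps)
  moreover have "\<bar>weight u (Suc j) * (u (Suc (Suc j)) - u (Suc j))\<bar> \<le> (1 - dt / ds) * \<bar>u (Suc (Suc j)) - u (Suc j)\<bar>"
    using weight_bounds[of u "Suc j"] assms by (simp add: abs_mult admissible_def mult_right_mono)
  moreover have "\<bar>dt / ds * (u (Suc j) - u j)\<bar> = dt / ds * \<bar>u (Suc j) - u j\<bar>"
    using ds_pos dt_pos by (simp add: abs_mult)
  moreover have "\<bar>dt * (q (Suc (Suc j)) - q (Suc j)) * u (Suc j)\<bar> \<le> dt * L * (ds * u (Suc j))"
  proof -
    have "\<bar>q (Suc (Suc j)) - q (Suc j)\<bar> \<le> L * ds"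
      using p_lipschitz_s[OF sgrid_pos[OF ds_pos] sgrid_pos[OF ds_pos], of "u 0" "Suc j" j]
        sgrid_Suc_diff[of ds "Suc j"] assms ds_pos by (simp add: q_def admissible_def)
    then have "\<bar>q (Suc (Suc j)) - q (Suc j)\<bar> * (dt * u (Suc j)) \<le> L * ds * (dt * u (Suc j))"
      using admissible_nonneg[OF assms, of "Suc j"] dt_pos by (intro mult_right_mono) auto
    then show ?thesis
      using admissible_nonneg[OF assms, of "Suc j"] dt_pos by (simp add: abs_mult ac_simps)
  qed
  moreover have "\<bar>x + y - z\<bar> \<le> \<bar>x\<bar> + \<bar>y\<bar> + \<bar>z\<bar>" for x y z :: real
    by arith
  ultimately show ?thesis
    by (smt (verit))
qed

lemma upwind_boundary_diff:
  assumes "admissible u"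
  shows "\<bar>upwind u 0 - N\<bar> \<le> (1 - dt / ds) * \<bar>u 1 - u 0\<bar> + \<bar>N - u 0\<bar> + dt * P * (P * M)"
proof -
  define q where "q = p (sgrid ds 1) (u 0)"
  have q: "0 \<le> q" "q \<le> P"
    using p_bounds[OF sgrid_pos[OF ds_pos], of "u 0" 0] assms by (auto simp: q_def admissible_def)
  have "upwind u 0 - N = weight u 0 * (u 1 - u 0) + (u 0 - N) - dt * q * u 0"
    by (simp add: upwind_def q_def algebra_simps)
  moreover have "\<bar>weight u 0 * (u 1 - u 0)\<bar> \<le> (1 - dt / ds) * \<bar>u 1 - u 0\<bar>"
    using weight_bounds[of u 0] assms by (simp add: abs_mult admissible_def mult_right_mono)
  moreover have "\<bar>dt * q * u 0\<bar> \<le> dt * P * (P * M)"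
  proof -
    have "q * u 0 \<le> P * (P * M)"
      using q admissible_boundary_le[OF assms] admissible_nonneg[OF assms, of 0] P_nonneg
      by (intro mult_mono) auto
    then show ?thesis
      using q admissible_nonneg[OF assms, of 0] dt_pos by (simp add: abs_mult mult_left_mono mult.assoc)
  qed
  moreover have "\<bar>x + y - z\<bar> \<le> \<bar>x\<bar> + \<bar>y\<bar> + \<bar>z\<bar>" for x y z :: real
    by arith
  ultimately show ?thesis
    by (smt (verit))
qed

lemma tv_upwind_le:
  assumes u: "admissible u" "summable (\<lambda>j. \<bar>u (Suc j) - u j\<bar>)" and v: "\<And>j. v (Suc j) = upwind u j"
  shows "summable (\<lambda>j. \<bar>v (Suc j) - v j\<bar>)"
    and "tv v \<le> tv u + \<bar>v 0 - u 0\<bar> + dt * (P * P + L) * M"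
proof -
  define g where "g j = (1 - dt / ds) * \<bar>u (Suc (Suc j)) - u (Suc j)\<bar> + dt / ds * \<bar>u (Suc j) - u j\<bar>
                        + dt * L * (ds * u (Suc j))" for j
  have "(\<lambda>j. \<bar>u (Suc (Suc j)) - u (Suc j)\<bar>) sums (tv u - \<bar>u 1 - u 0\<bar>)"
    using u(2) unfolding tv_def by (subst sums_Suc_iff) (simp add: summable_sums)
  then have g_sums: "g sums ((1 - dt / ds) * (tv u - \<bar>u 1 - u 0\<bar>) + dt / ds * tv u + dt * L * M)"
    unfolding g_def using u by (intro sums_add sums_mult) (auto simp: tv_def admissible_def summable_sums)
  have interior_le: "\<bar>v (Suc (Suc j)) - v (Suc j)\<bar> \<le> g j" for j
    unfolding v g_def by (rule upwind_interior_diff[OF u(1)])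
  have "summable (\<lambda>j. \<bar>v (Suc (Suc j)) - v (Suc j)\<bar>)"
    by (rule summable_comparison_test'[OF sums_summable[OF g_sums]]) (use interior_le in simp)
  then show sv: "summable (\<lambda>j. \<bar>v (Suc j) - v j\<bar>)"
    using summable_Suc_iff[of "\<lambda>j. \<bar>v (Suc j) - v j\<bar>"] by simp
  have "tv v = (\<Sum>j. \<bar>v (Suc (Suc j)) - v (Suc j)\<bar>) + \<bar>v 1 - v 0\<bar>"
    unfolding tv_def using suminf_split_head[OF sv] by simp
  also have "(\<Sum>j. \<bar>v (Suc (Suc j)) - v (Suc j)\<bar>) \<le> suminf g"
    by (rule suminf_le[OF interior_le \<open>summable (\<lambda>j. \<bar>v (Suc (Suc j)) - v (Suc j)\<bar>)\<close> sums_summable[OF g_sums]])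
  also have "\<bar>v 1 - v 0\<bar> \<le> (1 - dt / ds) * \<bar>u 1 - u 0\<bar> + \<bar>v 0 - u 0\<bar> + dt * P * (P * M)"
    using upwind_boundary_diff[OF u(1), of "v 0"] v[of 0] by simp
  finally show "tv v \<le> tv u + \<bar>v 0 - u 0\<bar> + dt * (P * P + L) * M"
    using sums_unique[OF g_sums] by (simp add: algebra_simps)
qed

lemma sgn_mul_slope_le:
  assumes "0 < M" "0 < s" "0 \<le> N" "0 \<le> N'"
  shows "sgn (N' - N) * (p s N' - p s N) \<le> c * \<bar>N' - N\<bar>"
  using p_slope_N[OF assms(1,2,3), of N'] p_slope_N[OF assms(1,2,4), of N]
  by (cases N N' rule: linorder_cases) (auto simp: algebra_simps)

lemma admissible_mass_zero:
  assumes "admissible u" "M = 0"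
  shows "u (Suc j) = 0"
proof -
  have "(\<lambda>j. ds * u (Suc j)) sums M" "\<And>j. 0 \<le> ds * u (Suc j)"
    using assms(1) ds_pos by (auto simp: admissible_def)
  then have "(\<lambda>j. ds * u (Suc j)) sums 0" "\<And>j. 0 \<le> ds * u (Suc j)"
    using assms(2) by auto
  then have "ds * u (Suc j) = 0"
    using suminf_eq_zero_iff[of "\<lambda>j. ds * u (Suc j)"] by (auto simp: sums_iff)
  then show ?thesis
    using ds_pos by simp
qed

lemma sgn_coefficient_change_le:
  assumes "admissible u" "admissible v"
  shows "sgn (v 0 - u 0) * ((p (sgrid ds (Suc j)) (v 0) - p (sgrid ds (Suc j)) (u 0)) * (ds * v (Suc j)))
           \<le> c * \<bar>v 0 - u 0\<bar> * (ds * v (Suc j))"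
proof (cases "M = 0")
  case True
  \<comment> \<open>no slope bound is available, but then all cells are empty\<close>
  then show ?thesis
    using admissible_mass_zero[OF assms(2)] by simp
next
  case False
  then have "sgn (v 0 - u 0) * (p (sgrid ds (Suc j)) (v 0) - p (sgrid ds (Suc j)) (u 0)) \<le> c * \<bar>v 0 - u 0\<bar>"
    using sgn_mul_slope_le[OF _ sgrid_pos[OF ds_pos]] M_nonneg assms by (simp add: admissible_def)
  then have "sgn (v 0 - u 0) * (p (sgrid ds (Suc j)) (v 0) - p (sgrid ds (Suc j)) (u 0)) * (ds * v (Suc j))
               \<le> c * \<bar>v 0 - u 0\<bar> * (ds * v (Suc j))"
    using admissible_nonneg[OF assms(2), of "Suc j"] ds_pos by (intro mult_right_mono) auto
  then show ?thesis
    by (simp only: mult.assoc)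
qed

lemma upwind_flux_change:
  assumes u: "admissible u" "summable (\<lambda>j. \<bar>u (Suc j) - u j\<bar>)" and v: "\<And>j. v (Suc j) = upwind u j"
  obtains S where "(\<lambda>j. ds * p (sgrid ds (Suc j)) (u 0) * (v (Suc j) - u (Suc j))) sums S"
    "\<bar>S\<bar> \<le> dt * P * tv u + dt * P * P * M"
proof -
  define q where "q j = p (sgrid ds (Suc j)) (u 0)" for j
  define S where "S = (\<lambda>j. ds * q j * (v (Suc j) - u (Suc j)))"
  have q: "0 \<le> q j" "q j \<le> P" for j
    using p_bounds[OF sgrid_pos[OF ds_pos], of "u 0" j] u(1) by (auto simp: q_def admissible_def)
  have S_eq: "S j = - (dt * q j * (u (Suc j) - u j)) - dt * q j * q j * (ds * u (Suc j))" for j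
    using ds_pos by (simp add: S_def v upwind_def q_def field_simps)
  have S_bound: "\<bar>S j\<bar> \<le> dt * P * \<bar>u (Suc j) - u j\<bar> + dt * P * P * (ds * u (Suc j))" for j
  proof -
    have "(q j * q j) * (dt * (ds * u (Suc j))) \<le> (P * P) * (dt * (ds * u (Suc j)))"
      using q P_nonneg dt_pos ds_pos admissible_nonneg[OF u(1), of "Suc j"] by (intro mult_right_mono mult_mono) auto
    moreover have "\<bar>dt * q j * (u (Suc j) - u j)\<bar> \<le> dt * P * \<bar>u (Suc j) - u j\<bar>"
      using q dt_pos by (simp add: abs_mult mult_right_mono)
    moreover have "0 \<le> dt * q j * q j * (ds * u (Suc j))"
      using q dt_pos ds_pos admissible_nonneg[OF u(1), of "Suc j"] by simp
    ultimately show ?thesis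
      unfolding S_eq by (simp add: ac_simps)
  qed
  have bound_sums: "(\<lambda>j. dt * P * \<bar>u (Suc j) - u j\<bar> + dt * P * P * (ds * u (Suc j)))
      sums (dt * P * tv u + dt * P * P * M)"
    using u unfolding tv_def admissible_def by (intro sums_add sums_mult) (auto simp: summable_sums)
  have S_abs: "summable (\<lambda>j. \<bar>S j\<bar>)"
    by (rule summable_comparison_test'[OF sums_summable[OF bound_sums]]) (use S_bound in simp)
  show thesis
  proof (rule that)
    show "(\<lambda>j. ds * p (sgrid ds (Suc j)) (u 0) * (v (Suc j) - u (Suc j))) sums suminf S"
      using summable_sums[OF summable_rabs_cancel[OF S_abs]] by (simp add: S_def q_def)
    have "\<bar>suminf S\<bar> \<le> (\<Sum>j. \<bar>S j\<bar>)"
      by (rule summable_rabs[OF S_abs])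
    also have "\<dots> \<le> dt * P * tv u + dt * P * P * M"
      using suminf_le[OF S_bound S_abs sums_summable[OF bound_sums]] sums_unique[OF bound_sums] by simp
    finally show "\<bar>suminf S\<bar> \<le> dt * P * tv u + dt * P * P * M" .
  qed
qed

lemma upwind_boundary_value_change:
  assumes u: "admissible u" "summable (\<lambda>j. \<bar>u (Suc j) - u j\<bar>)"
    and v: "admissible v" "\<And>j. v (Suc j) = upwind u j"
  shows "(1 - c * M) * \<bar>v 0 - u 0\<bar> \<le> dt * P * tv u + dt * P * P * M"
proof -
  obtain S where S: "(\<lambda>j. ds * p (sgrid ds (Suc j)) (u 0) * (v (Suc j) - u (Suc j))) sums S"
    "\<bar>S\<bar> \<le> dt * P * tv u + dt * P * P * M"
    using upwind_flux_change[OF u v(2)] .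
  have "(\<lambda>j. ds * p (sgrid ds (Suc j)) (v 0) * v (Suc j) - ds * p (sgrid ds (Suc j)) (u 0) * (v (Suc j) - u (Suc j))
      - ds * p (sgrid ds (Suc j)) (u 0) * u (Suc j)) sums (v 0 - S - u 0)"
    using u(1) v(1) S(1) by (intro sums_diff) (auto simp: admissible_def)
  then have "(\<lambda>j. (p (sgrid ds (Suc j)) (v 0) - p (sgrid ds (Suc j)) (u 0)) * (ds * v (Suc j))) sums (v 0 - u 0 - S)"
    by (simp add: algebra_simps)
  moreover have "(\<lambda>j. c * \<bar>v 0 - u 0\<bar> * (ds * v (Suc j))) sums (c * \<bar>v 0 - u 0\<bar> * M)"
    using v(1) unfolding admissible_def by (intro sums_mult) simp
  ultimately have "sgn (v 0 - u 0) * (v 0 - u 0 - S) \<le> c * \<bar>v 0 - u 0\<bar> * M"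
    by (rule sums_le[OF sgn_coefficient_change_le[OF u(1) v(1)] sums_mult])
  moreover have "\<bar>v 0 - u 0\<bar> \<le> sgn (v 0 - u 0) * (v 0 - u 0 - S) + \<bar>S\<bar>"
    by (cases "v 0" "u 0" rule: linorder_cases) auto
  ultimately show ?thesis
    using S(2) by (simp add: algebra_simps)
qed

lemma tv_upwind_step:
  assumes u: "admissible u" "summable (\<lambda>j. \<bar>u (Suc j) - u j\<bar>)"
    and v: "admissible v" "\<And>j. v (Suc j) = upwind u j"
  shows "tv v \<le> (1 + dt * (P / (1 - c * M))) * tv u + dt * ((P * P + L) * M + P * P * M / (1 - c * M))"
proof -
  define K where "K = 1 - c * M"
  have "0 < K"
    using cM_less by (simp add: K_def)
  have "\<bar>v 0 - u 0\<bar> \<le> (dt * P * tv u + dt * P * P * M) / K"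
    using upwind_boundary_value_change[OF u v] \<open>0 < K\<close> by (simp add: K_def field_simps)
  then have "tv v \<le> tv u + (dt * P * tv u + dt * P * P * M) / K + dt * (P * P + L) * M"
    using tv_upwind_le(2)[OF u v(2)] by linarith
  also have "\<dots> = (1 + dt * (P / K)) * tv u + dt * ((P * P + L) * M + P * P * M / K)"
    using \<open>0 < K\<close> by (simp add: field_simps)
  finally show ?thesis
    by (simp add: K_def)
qed

lemma upwind_iterates:
  fixes n :: "nat \<Rightarrow> nat \<Rightarrow> real"
  assumes init: "admissible (n 0)" "summable (\<lambda>j. \<bar>n 0 (Suc j) - n 0 j\<bar>)"
    and boundary: "\<And>k. 0 \<le> n k 0 \<and> (\<lambda>j. ds * p (sgrid ds (Suc j)) (n k 0) * n k (Suc j)) sums n k 0"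
    and step: "\<And>k j. n (Suc k) (Suc j) = upwind (n k) j"
  shows "admissible (n k)" and "summable (\<lambda>j. \<bar>n k (Suc j) - n k j\<bar>)"
proof -
  show admissible: "admissible (n k)" for k
  proof (induction k)
    case (Suc k)
    then show ?case
      using boundary[of "Suc k"] upwind_nonneg upwind_sums_mass by (simp add: admissible_def step)
  qed (rule init(1))
  show "summable (\<lambda>j. \<bar>n k (Suc j) - n k j\<bar>)"
    by (induction k) (use init(2) tv_upwind_le(1)[OF admissible] step in auto)
qed

lemma tv_bound:
  fixes n :: "nat \<Rightarrow> nat \<Rightarrow> real"
  assumes init: "admissible (n 0)" "summable (\<lambda>j. \<bar>n 0 (Suc j) - n 0 j\<bar>)"
    and boundary: "\<And>k. 0 \<le> n k 0 \<and> (\<lambda>j. ds * p (sgrid ds (Suc j)) (n k 0) * n k (Suc j)) sums n k 0"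
    and step: "\<And>k j. n (Suc k) (Suc j) = upwind (n k) j"
    and C1: "P / (1 - c * M) \<le> C1" "0 < C1" and C2: "((P * P + L) * M + P * P * M / (1 - c * M)) / C1 \<le> C2"
  shows "tv (n k) \<le> exp (C1 * (real k * dt)) * tv (n 0) + C2 * (exp (C1 * (real k * dt)) - 1)"
proof (rule discrete_gronwall_exp[OF _ _ less_imp_le[OF dt_pos] _ C1(1,2) _ C2])
  note iterates = upwind_iterates[where n = n, OF init boundary step]
  show "tv (n (Suc k)) \<le> (1 + dt * (P / (1 - c * M))) * tv (n k) + dt * ((P * P + L) * M + P * P * M / (1 - c * M))" for k
    using tv_upwind_step[OF iterates(1,2)[of k] iterates(1)[of "Suc k"] step] .
  show "0 \<le> tv (n k)" for k
    using iterates(2) by (simp add: tv_def suminf_nonneg)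
  have "0 < 1 - c * M"
    using cM_less by simp
  then show "0 \<le> P / (1 - c * M)" "0 \<le> (P * P + L) * M + P * P * M / (1 - c * M)"
    using P_nonneg L_nonneg M_nonneg by auto
qed

lemma discTV_bound:
  fixes n :: "nat \<Rightarrow> nat \<Rightarrow> real"
  assumes init: "\<forall>j\<ge>1. 0 \<le> n 0 j" "(\<lambda>j. ds * \<bar>n 0 (Suc j)\<bar>) sums M"
    and fixpoint: "\<forall>k. 0 \<le> N k \<and> (\<lambda>j. ds * p (sgrid ds (Suc j)) (N k) * n k (Suc j)) sums N k"
    and boundary: "\<forall>k. n k 0 = N k"
    and scheme: "\<forall>k. \<forall>j\<ge>1. n (Suc k) j = n k j - dt / ds * (n k j - n k (j - 1))
                                   - dt * p (sgrid ds j) (N k) * n k j"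
    and tv_init: "discTV (n 0) < \<infinity>"
    and C1: "P / (1 - c * M) \<le> C1" "0 < C1" and C2: "((P * P + L) * M + P * P * M / (1 - c * M)) / C1 \<le> C2"
  shows "discTV (n m) \<le> ennreal (exp (C1 * (real m * dt))) * discTV (n 0)
                          + ennreal (C2 * (exp (C1 * (real m * dt)) - 1))"
proof -
  have admissible: "admissible (n 0)"
    using init fixpoint boundary by (simp add: admissible_def)
  have fixpoint: "0 \<le> n k 0 \<and> (\<lambda>j. ds * p (sgrid ds (Suc j)) (n k 0) * n k (Suc j)) sums n k 0" for k
    using fixpoint boundary by simp
  have step: "n (Suc k) (Suc j) = upwind (n k) j" for k j
    using scheme boundary by (simp add: upwind_def)
  have tv_init: "summable (\<lambda>j. \<bar>n 0 (Suc j) - n 0 j\<bar>)"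
    unfolding discTV_def by (rule summable_suminf_not_top) (use tv_init in \<open>auto simp: discTV_def\<close>)
  note iterates = upwind_iterates[where n = n, OF admissible tv_init fixpoint step]
  define E where "E = exp (C1 * (real m * dt))"
  have "0 \<le> (P * P + L) * M + P * P * M / (1 - c * M)"
    using P_nonneg L_nonneg M_nonneg cM_less by simp
  then have "0 \<le> C2"
    using C1(2) C2 by (meson divide_nonneg_pos order_trans)
  have "0 \<le> tv (n 0)" "1 \<le> E"
    using tv_init C1 dt_pos by (auto simp: tv_def suminf_nonneg E_def)
  have "discTV (n m) = ennreal (tv (n m))"
    using iterates(2) by (simp add: discTV_def tv_def suminf_ennreal2)
  also have "\<dots> \<le> ennreal (E * tv (n 0) + C2 * (E - 1))"
    unfolding E_def by (intro ennreal_leI tv_bound[where n = n, OF admissible tv_init fixpoint step C1 C2])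
  also have "\<dots> = ennreal E * ennreal (tv (n 0)) + ennreal (C2 * (E - 1))"
    using \<open>0 \<le> tv (n 0)\<close> \<open>1 \<le> E\<close> \<open>0 \<le> C2\<close> by (simp add: ennreal_mult)
  also have "ennreal (tv (n 0)) = discTV (n 0)"
    using tv_init by (simp add: discTV_def tv_def suminf_ennreal2)
  finally show ?thesis
    by (simp add: E_def)
qed

end

lemma ereal_mult_less_one_obtain:
  fixes \<gamma> :: ereal and M :: real
  assumes "\<gamma> * ereal M < 1"
  obtains c where "0 \<le> c" "c * M < 1" "0 < M \<Longrightarrow> \<gamma> < ereal c"
proof (cases "0 < M")
  case True
  have "\<gamma> < ereal (1 / M)"
    using assms True by (cases \<gamma>) (auto simp: field_simps)
  then obtain z where "\<gamma> < ereal z" "z < 1 / M"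
    using ereal_dense2 by (metis less_ereal.simps(1))
  show thesis
  proof (rule that[of "max z 0"])
    show "max z 0 * M < 1"
      using \<open>z < 1 / M\<close> True by (auto simp: field_simps max_def)
    show "\<gamma> < ereal (max z 0)"
      using \<open>\<gamma> < ereal z\<close> by (rule order_less_le_trans) simp
  qed simp
next
  case False
  then show thesis
    by (intro that[of 0]) auto
qed

lemma abs_le_supnormP:
  assumes "bounded ((\<lambda>x. p (fst x) (snd x)) ` quadrant)" "0 \<le> s" "0 \<le> N"
  shows "\<bar>p s N\<bar> \<le> supnormP p"
proof -
  obtain B where "\<forall>y\<in>(\<lambda>x. p (fst x) (snd x)) ` quadrant. \<bar>y\<bar> \<le> B"
    using assms(1) bounded_real by blast
  then have "bdd_above ((\<lambda>x. \<bar>p (fst x) (snd x)\<bar>) ` quadrant)"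
    by (auto simp: bdd_above_def)
  moreover have "(s, N) \<in> quadrant"
    using assms by (simp add: quadrant_def)
  ultimately show ?thesis
    unfolding supnormP_def using cSUP_upper by fastforce
qed

lemma upwind_schemeI:
  fixes p :: "real \<Rightarrow> real \<Rightarrow> real"
  assumes p_bdd: "bounded ((\<lambda>x. p (fst x) (snd x)) ` quadrant)"
    and lip: "L-lipschitz_on quadrant (\<lambda>x. p (fst x) (snd x))" and p_nonneg: "\<forall>s\<ge>0. \<forall>N\<ge>0. 0 \<le> p s N"
    and c: "0 \<le> c" "c * M < 1" "0 < M \<Longrightarrow> gammaP p < ereal c" and "0 \<le> M"
    and "0 < ds" "0 < dt" "dt \<le> 1 / (1 / ds + supnormP p)"
  shows "upwind_scheme p (supnormP p) L c M ds dt"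
proof
  show "0 \<le> p s N \<and> p s N \<le> supnormP p" if "0 < s" "0 \<le> N" for s N
    using p_nonneg abs_le_supnormP[OF p_bdd, of s N] that by auto
  have "0 \<le> supnormP p"
    using abs_le_supnormP[OF p_bdd, of 0 0] by simp
  then show "dt * (1 / ds + supnormP p) \<le> 1"
    using \<open>0 < ds\<close> \<open>dt \<le> 1 / (1 / ds + supnormP p)\<close> by (simp add: le_divide_eq add_pos_nonneg)
  show "\<bar>p s N - p s' N\<bar> \<le> L * \<bar>s - s'\<bar>" if "0 < s" "0 < s'" "0 \<le> N" for s s' N
    using lipschitz_onD[OF lipschitz_on_quadrant_slice_s[OF lip \<open>0 \<le> N\<close>], of s s'] that
    by (simp add: dist_real_def)
  show "p s N' - p s N \<le> c * (N' - N)" if "0 < M" "0 < s" "0 \<le> N" "N \<le> N'" for s N N'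
    using slope_le_of_gammaP_less[OF lip c(3)[OF \<open>0 < M\<close>]] that by simp
qed (use assms lipschitz_on_nonneg[OF lip] in auto)

theorem mainTheorem6:
  fixes p :: "real \<Rightarrow> real \<Rightarrow> real" and M1 Minf :: real
  assumes p_bdd: "bounded ((\<lambda>x. p (fst x) (snd x)) ` quadrant)"
      and p_lip: "\<exists>L. L-lipschitz_on quadrant (\<lambda>x. p (fst x) (snd x))"
      and p_nonneg: "\<forall>s\<ge>0. \<forall>N\<ge>0. p s N \<ge> 0"
      and small: "gammaP p * ereal M1 < 1"
  shows "\<exists>C1 C2. C1 > 0 \<and> C2 > 0 \<and>
    (\<forall>ds dt (n :: nat \<Rightarrow> nat \<Rightarrow> real) (N :: nat \<Rightarrow> real) m.
       ds > 0 \<longrightarrow> dt > 0 \<longrightarrow>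
       dt \<le> 1 / (1 / ds + supnormP p) \<longrightarrow>
       (\<forall>j\<ge>1. n 0 j \<ge> 0) \<longrightarrow>
       (\<lambda>j. ds * \<bar>n 0 (Suc j)\<bar>) sums M1 \<longrightarrow>
       bdd_above (range (\<lambda>j. \<bar>n 0 (Suc j)\<bar>)) \<longrightarrow>
       (SUP j. \<bar>n 0 (Suc j)\<bar>) = Minf \<longrightarrow>
       (\<forall>k. N k \<ge> 0 \<and>
            (\<lambda>j. ds * p (sgrid ds (Suc j)) (N k) * n k (Suc j)) sums N k) \<longrightarrow>
       (\<forall>k. n k 0 = N k) \<longrightarrow>
       (\<forall>k. \<forall>j\<ge>1. n (Suc k) j = n k j - dt / ds * (n k j - n k (j - 1))
                                   - dt * p (sgrid ds j) (N k) * n k j) \<longrightarrow>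
       discTV (n 0) < \<infinity> \<longrightarrow>
       discTV (n m) \<le> ennreal (exp (C1 * (real m * dt))) * discTV (n 0)
                      + ennreal (C2 * (exp (C1 * (real m * dt)) - 1)))"
proof -
  obtain L where lip: "L-lipschitz_on quadrant (\<lambda>x. p (fst x) (snd x))"
    using p_lip by blast
  obtain c where c: "0 \<le> c" "c * M1 < 1" "0 < M1 \<Longrightarrow> gammaP p < ereal c"
    using ereal_mult_less_one_obtain[OF small] by blast
  define P where "P = supnormP p"
  define C1 where "C1 = P / (1 - c * M1) + 1"
  define Cp where "Cp = (P * P + L) * M1 + P * P * M1 / (1 - c * M1)"
  \<comment> \<open>\<open>\<bar>Cp\<bar>\<close> differs from \<open>Cp\<close> only if \<open>M1 < 0\<close>, when no initial datum has mass \<open>M1\<close>\<close>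
  define C2 where "C2 = \<bar>Cp\<bar> / C1 + 1"
  have "0 \<le> P"
    using abs_le_supnormP[OF p_bdd, of 0 0] by (simp add: P_def)
  then have C1: "P / (1 - c * M1) \<le> C1" "0 < C1"
    using c(2) by (simp_all add: C1_def add_nonneg_pos)
  then have C2: "Cp / C1 \<le> C2" "0 < C2"
    using divide_right_mono[OF abs_ge_self[of Cp], of C1] by (simp_all add: C2_def add_nonneg_pos)
  show ?thesis
  proof (intro exI conjI allI impI)
    fix ds dt :: real and n :: "nat \<Rightarrow> nat \<Rightarrow> real" and N :: "nat \<Rightarrow> real" and m :: nat
    assume grid: "ds > 0" "dt > 0" "dt \<le> 1 / (1 / ds + supnormP p)"
      and init: "\<forall>j\<ge>1. n 0 j \<ge> 0" "(\<lambda>j. ds * \<bar>n 0 (Suc j)\<bar>) sums M1"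
      and "bdd_above (range (\<lambda>j. \<bar>n 0 (Suc j)\<bar>))" "(SUP j. \<bar>n 0 (Suc j)\<bar>) = Minf"
      and scheme: "\<forall>k. N k \<ge> 0 \<and> (\<lambda>j. ds * p (sgrid ds (Suc j)) (N k) * n k (Suc j)) sums N k"
        "\<forall>k. n k 0 = N k"
        "\<forall>k. \<forall>j\<ge>1. n (Suc k) j = n k j - dt / ds * (n k j - n k (j - 1)) - dt * p (sgrid ds j) (N k) * n k j"
        "discTV (n 0) < \<infinity>"
    have "0 \<le> M1"
      using sums_le[OF _ sums_zero init(2)] grid(1) by simp
    have "upwind_scheme p P L c M1 ds dt"
      unfolding P_def using p_bdd lip p_nonneg c \<open>0 \<le> M1\<close> grid by (rule upwind_schemeI)
    then interpret upwind_scheme p P L c M1 ds dt .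
    show "discTV (n m) \<le> ennreal (exp (C1 * (real m * dt))) * discTV (n 0)
                         + ennreal (C2 * (exp (C1 * (real m * dt)) - 1))"
      by (rule discTV_bound[OF init scheme C1 C2(1)[unfolded Cp_def]])
  qed (use C1 C2 in auto)
qed

end
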